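(* Let $\Sigma$ be a finite set of primes, $k$ a positive integer, and $a_1,\ldots,a_k,b_1,\ldots,b_k\in\mathbb{Z}$ with $a_i\neq0$, $\gcd(a_i,b_i)=1$, $a_ib_j-a_jb_i\neq0$ ($i<j$), such that $(2k)!\prod_i a_i\prod_{i<j}(a_ib_j-a_jb_i)$ is a $\Sigma$-unit. Let $M=\max\{|a_1|,\ldots,|a_k|,|b_1|,\ldots,|b_k|\}$. Then for real $x\ge z\ge2$, the set $\Omega(x,z)$ has at most $$kM\frac{x+1}{z-1}+k\sqrt{Mx+M}$$ elements $n$ such that $L_i(n)$ is not $\Sigma$-square-free for some $i\in\{1,\ldots,k\}$.
   Context: An integer is a $\Sigma$-unit if all its prime divisors lie in $\Sigma$; it is $\Sigma$-square-free if it is a product of a $\Sigma$-unit and a square-free integer. $P_\Sigma(z)=\prod_{p<z,\,p\notin\Sigma}p$. $L_i(n)=a_in+b_i$. $\Omega(x,z)=\{n\in\mathbb{Z}:1\le n\le x,\ \gcd(L_1(n)\cdots L_k(n),P_\Sigma(z))=1\}$. *)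

theory Defs
  imports Complex_Main "HOL-Computational_Algebra.Computational_Algebra"
begin

definition sigma_unit :: "int set \<Rightarrow> int \<Rightarrow> bool" where
  "sigma_unit \<Sigma> m \<longleftrightarrow> (\<forall>p::int. prime p \<and> p dvd m \<longrightarrow> p \<in> \<Sigma>)"

definition sigma_squarefree :: "int set \<Rightarrow> int \<Rightarrow> bool" where
  "sigma_squarefree \<Sigma> m \<longleftrightarrow> (\<exists>u s. sigma_unit \<Sigma> u \<and> squarefree s \<and> m = u * s)"

definition P_sigma :: "int set \<Rightarrow> real \<Rightarrow> int" where
  "P_sigma \<Sigma> z = (\<Prod>{p::int. prime p \<and> real_of_int p < z \<and> p \<notin> \<Sigma>})"

definition Omega :: "int set \<Rightarrow> nat \<Rightarrow> (nat \<Rightarrow> int) \<Rightarrow> (nat \<Rightarrow> int) \<Rightarrow> real \<Rightarrow> real \<Rightarrow> int set" where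
  "Omega \<Sigma> k a b x z = {n::int. 1 \<le> n \<and> real_of_int n \<le> x \<and>
      gcd (\<Prod>i\<in>{1..k}. a i * n + b i) (P_sigma \<Sigma> z) = 1}"

end

theory Submission
  imports Defs
begin

(* A value L(n) = a n + b that is not Sigma-square-free is either 0, which happens for at most
   one n, or divisible by p^2 for a prime p outside Sigma. For n in Omega(x,z) the sieve
   condition forces p >= z, and p^2 <= |L(n)| <= M x + M forces p <= sqrt(M x + M). Since p does
   not divide the Sigma-unit a, the n <= x with p^2 | L(n) form one residue class mod p^2, so
   there are at most x/p^2 + 1 of them. Summing over the primes in [z, sqrt(M x + M)] and using
   sum_{p >= z} 1/p^2 <= 1/(z-1) bounds the exceptions for one form by x/(z-1) + sqrt(M x + M);
   then sum over the k forms. *)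

lemma sigma_unit_dvd:
  assumes "sigma_unit \<Sigma> m" "d dvd m"
  shows "sigma_unit \<Sigma> d"
  using assms dvd_trans unfolding sigma_unit_def by blast

lemma sigma_squarefreeI:
  fixes m :: int
  assumes "\<And>p. prime p \<Longrightarrow> p^2 dvd m \<Longrightarrow> p \<in> \<Sigma>"
  shows "sigma_squarefree \<Sigma> m"
proof -
  have "sigma_unit \<Sigma> (square_part m ^ 2)"
    unfolding sigma_unit_def
    using assms dvd_square_part_iff prime_dvd_power by blast
  moreover have "m = square_part m ^ 2 * squarefree_part m"
    using squarefree_decompose[of m] by (simp add: mult.commute)
  ultimately show ?thesis
    unfolding sigma_squarefree_def using squarefree_squarefree_part by blast
qed

lemma card_le_of_mod_eq:
  fixes S :: "int set" and q N :: int
  assumes "S \<subseteq> {1..N}" "0 < q" "0 \<le> N"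
    and "\<And>n n'. n \<in> S \<Longrightarrow> n' \<in> S \<Longrightarrow> n mod q = n' mod q"
  shows "real (card S) \<le> real_of_int N / real_of_int q + 1"
proof -
  have "inj_on (\<lambda>n. n div q) S"
  proof (rule inj_onI)
    fix n n' assume "n \<in> S" "n' \<in> S" "n div q = n' div q"
    then show "n = n'" using assms(4) by (metis div_mult_mod_eq)
  qed
  moreover have "(\<lambda>n. n div q) ` S \<subseteq> {0..N div q}"
  proof
    fix y assume "y \<in> (\<lambda>n. n div q) ` S"
    then obtain n where "y = n div q" "1 \<le> n" "n \<le> N" using assms(1) by auto
    with assms(2) show "y \<in> {0..N div q}"
      by (auto intro: zdiv_mono1 simp: pos_imp_zdiv_nonneg_iff)
  qed
  ultimately have "card S \<le> card {0..N div q}"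
    by (metis card_image card_mono finite_atLeastAtMost_int)
  also have "\<dots> = nat (N div q + 1)"
    by simp
  finally have "real (card S) \<le> real_of_int (N div q) + 1"
    using assms(2,3) pos_imp_zdiv_nonneg_iff[of q N] by linarith
  also have "\<dots> \<le> real_of_int N / real_of_int q + 1"
    using real_of_int_div4 by simp
  finally show ?thesis .
qed

lemma sum_inverse_squares_atLeastAtMost_le:
  fixes c N :: int
  assumes "2 \<le> c" "c - 1 \<le> N"
  shows "(\<Sum>p\<in>{c..N}. 1 / real_of_int p ^ 2) \<le> 1 / (c - 1) - 1 / N"
  using assms(2)
proof (induction N rule: int_ge_induct)
  case base
  then show ?case by simp
next
  case (step N)
  have "1 / real_of_int (N + 1) ^ 2 \<le> 1 / N - 1 / (N + 1)"
  proof -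
    have N: "1 \<le> real_of_int N" using step.hyps assms(1) by simp
    then have "1 / real_of_int N - 1 / (N + 1) = 1 / (N * (N + 1))"
      by (simp add: field_simps)
    moreover have "1 / real_of_int (N + 1) ^ 2 \<le> 1 / (N * (N + 1))"
      using N by (intro divide_left_mono) (auto simp: power2_eq_square)
    ultimately show ?thesis by simp
  qed
  moreover have "{c..N + 1} = insert (N + 1) {c..N}"
    using step.hyps by auto
  ultimately show ?case
    using step.IH by simp
qed

lemma sum_inverse_squares_le:
  fixes P :: "int set" and z :: real
  assumes "finite P" "\<And>p. p \<in> P \<Longrightarrow> z \<le> p" "2 \<le> z"
  shows "(\<Sum>p\<in>P. 1 / real_of_int p ^ 2) \<le> 1 / (z - 1)"
proof (cases "P = {}")
  case False
  define c where "c = \<lceil>z\<rceil>"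
  have c: "2 \<le> c" "z \<le> c" "c \<le> Max P"
    using assms False Max_in[of P] by (auto simp: c_def le_ceiling_iff ceiling_le_iff)
  have "(\<Sum>p\<in>P. 1 / real_of_int p ^ 2) \<le> (\<Sum>p\<in>{c..Max P}. 1 / real_of_int p ^ 2)"
    using assms by (intro sum_mono2) (auto simp: c_def ceiling_le_iff)
  also have "\<dots> \<le> 1 / (c - 1) - 1 / Max P"
    using c by (intro sum_inverse_squares_atLeastAtMost_le) auto
  also have "\<dots> \<le> 1 / (c - 1)"
    using c by simp
  also have "\<dots> \<le> 1 / (z - 1)"
    using c assms(3) by (intro divide_left_mono) auto
  finally show ?thesis .
qed (use assms in simp)

lemma card_subset_atLeastAtMost_floor_le:
  fixes A :: "int set" and s :: real
  assumes "A \<subseteq> {2..\<lfloor>s\<rfloor>}" "1 \<le> s"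
  shows "real (card A) \<le> s - 1"
proof -
  have "card A \<le> nat (\<lfloor>s\<rfloor> - 1)"
    using card_mono[OF _ assms(1)] by simp
  moreover have "1 \<le> \<lfloor>s\<rfloor>"
    using assms(2) by (simp add: le_floor_iff)
  ultimately have "int (card A) \<le> \<lfloor>s\<rfloor> - 1"
    by linarith
  then have "real (card A) \<le> real_of_int \<lfloor>s\<rfloor> - 1"
    by (metis of_int_1 of_int_diff of_int_le_iff of_int_of_nat_eq)
  then show ?thesis
    by linarith
qed

lemma card_dvd_linear_le:
  fixes S :: "int set" and q \<alpha> \<beta> :: int and x :: real
  assumes "S \<subseteq> {1..\<lfloor>x\<rfloor>}" "0 \<le> x" "0 < q" "coprime q \<alpha>"
  shows "real (card {n \<in> S. q dvd \<alpha> * n + \<beta>}) \<le> x / q + 1"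
proof -
  have "real (card {n \<in> S. q dvd \<alpha> * n + \<beta>}) \<le> real_of_int \<lfloor>x\<rfloor> / q + 1"
  proof (rule card_le_of_mod_eq)
    fix n n' assume "n \<in> {n \<in> S. q dvd \<alpha> * n + \<beta>}" "n' \<in> {n \<in> S. q dvd \<alpha> * n + \<beta>}"
    then have "q dvd (\<alpha> * n + \<beta>) - (\<alpha> * n' + \<beta>)"
      by (blast intro: dvd_diff)
    then have "q dvd \<alpha> * (n - n')"
      by (simp add: algebra_simps)
    then have "q dvd n - n'"
      using assms(4) coprime_dvd_mult_right_iff by blast
    then show "n mod q = n' mod q"
      by (simp add: mod_eq_dvd_iff)
  qed (use assms in \<open>auto simp: le_floor_iff\<close>)
  also have "\<dots> \<le> x / q + 1"
    using assms(3) by (simp add: divide_right_mono)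
  finally show ?thesis .
qed

lemma card_UN_le_mult:
  fixes c :: real
  assumes "finite I" "\<And>i. i \<in> I \<Longrightarrow> real (card (A i)) \<le> c"
  shows "real (card (\<Union>i\<in>I. A i)) \<le> card I * c"
proof -
  have "real (card (\<Union>i\<in>I. A i)) \<le> (\<Sum>i\<in>I. real (card (A i)))"
    using card_UN_le[OF assms(1)] by (simp flip: of_nat_sum)
  also have "\<dots> \<le> (\<Sum>i\<in>I. c)"
    using assms(2) by (rule sum_mono)
  finally show ?thesis
    by simp
qed

lemma card_le_Un_UN:
  assumes "A \<subseteq> Z \<union> (\<Union>p\<in>P. C p)" "finite Z" "finite P" "\<And>p. p \<in> P \<Longrightarrow> finite (C p)"
  shows "card A \<le> card Z + (\<Sum>p\<in>P. card (C p))"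
proof -
  have "card A \<le> card (Z \<union> (\<Union>p\<in>P. C p))"
    using assms by (intro card_mono) auto
  also have "\<dots> \<le> card Z + card (\<Union>p\<in>P. C p)"
    by (rule card_Un_le)
  also have "\<dots> \<le> card Z + (\<Sum>p\<in>P. card (C p))"
    using card_UN_le[OF assms(3)] by simp
  finally show ?thesis .
qed

lemma card_zeros_linear_le:
  fixes \<alpha> \<beta> :: int
  assumes "\<alpha> \<noteq> 0" "finite S"
  shows "card {n \<in> S. \<alpha> * n + \<beta> = 0} \<le> 1"
proof -
  have "n = n'" if "\<alpha> * n + \<beta> = 0" "\<alpha> * n' + \<beta> = 0" for n n'
    using that assms(1) by (metis add_right_cancel mult_cancel_left)
  then show ?thesis
    using card_le_Suc0_iff_eq[of "{n \<in> S. \<alpha> * n + \<beta> = 0}"] assms(2) by auto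
qed

lemma obtain_prime_square_dvd_linear:
  fixes \<alpha> \<beta> n M :: int and x :: real
  assumes "\<not> sigma_squarefree \<Sigma> (\<alpha> * n + \<beta>)" "\<alpha> * n + \<beta> \<noteq> 0"
    and "1 \<le> n" "n \<le> x" "\<bar>\<alpha>\<bar> \<le> M" "\<bar>\<beta>\<bar> \<le> M"
  obtains p where "prime p" "p \<notin> \<Sigma>" "p\<^sup>2 dvd \<alpha> * n + \<beta>" "p \<le> sqrt (M * x + M)"
proof -
  obtain p where p: "prime p" "p \<notin> \<Sigma>" "p\<^sup>2 dvd \<alpha> * n + \<beta>"
    using sigma_squarefreeI assms(1) by blast
  have "p\<^sup>2 \<le> \<bar>\<alpha> * n + \<beta>\<bar>"
    using p(3) assms(2) by (intro zdvd_imp_le) auto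
  also have "\<dots> \<le> \<bar>\<alpha>\<bar> * n + \<bar>\<beta>\<bar>"
    using assms(3) abs_triangle_ineq[of "\<alpha> * n" \<beta>] by (auto simp: abs_mult)
  finally have "real_of_int p ^ 2 \<le> \<bar>\<alpha>\<bar> * real_of_int n + \<bar>\<beta>\<bar>"
    by (metis of_int_add of_int_le_iff of_int_mult of_int_power)
  also have "\<dots> \<le> M * x + M"
    using assms(3-6) by (intro add_mono mult_mono) auto
  finally have "p \<le> sqrt (M * x + M)"
    by (rule real_le_rsqrt)
  with p show ?thesis
    using that by blast
qed

lemma card_not_sigma_squarefree_le:
  fixes \<Sigma> :: "int set" and S :: "int set" and \<alpha> \<beta> M :: int and x z :: real
  assumes S: "S \<subseteq> {1..\<lfloor>x\<rfloor>}"
    and \<alpha>: "\<alpha> \<noteq> 0" "sigma_unit \<Sigma> \<alpha>"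
    and M: "\<bar>\<alpha>\<bar> \<le> M" "\<bar>\<beta>\<bar> \<le> M"
    and sifted: "\<And>n p. n \<in> S \<Longrightarrow> prime p \<Longrightarrow> p \<notin> \<Sigma> \<Longrightarrow> p dvd \<alpha> * n + \<beta> \<Longrightarrow> z \<le> p"
    and "2 \<le> z" "z \<le> x"
  shows "real (card {n \<in> S. \<not> sigma_squarefree \<Sigma> (\<alpha> * n + \<beta>)})
           \<le> x / (z - 1) + sqrt (M * x + M)"
proof -
  define s where "s = sqrt (M * x + M)"
  define P where "P = {p. prime p \<and> p \<notin> \<Sigma> \<and> z \<le> p \<and> p \<le> s}"
  define C where "C p = {n \<in> S. p\<^sup>2 dvd \<alpha> * n + \<beta>}" for p
  define Z where "Z = {n \<in> S. \<alpha> * n + \<beta> = 0}"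
  have finS: "finite S"
    using S finite_subset by blast
  have "1 \<le> M"
    using \<alpha>(1) M(1) by linarith
  then have "1 \<le> M * x + M"
    using \<open>2 \<le> z\<close> \<open>z \<le> x\<close> by (simp add: add_increasing)
  then have s1: "1 \<le> s"
    by (simp add: s_def)
  have P_sub: "P \<subseteq> {2..\<lfloor>s\<rfloor>}"
    by (auto simp: P_def le_floor_iff prime_ge_2_int)
  then have finP: "finite P"
    using finite_subset by blast
  have cover: "{n \<in> S. \<not> sigma_squarefree \<Sigma> (\<alpha> * n + \<beta>)} \<subseteq> Z \<union> (\<Union>p\<in>P. C p)"
  proof
    fix n assume "n \<in> {n \<in> S. \<not> sigma_squarefree \<Sigma> (\<alpha> * n + \<beta>)}"
    then have n: "n \<in> S" "\<not> sigma_squarefree \<Sigma> (\<alpha> * n + \<beta>)"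
      by auto
    show "n \<in> Z \<union> (\<Union>p\<in>P. C p)"
    proof (cases "\<alpha> * n + \<beta> = 0")
      case False
      have "1 \<le> n" "n \<le> x"
        using n(1) S by (auto simp: le_floor_iff)
      then obtain p where p: "prime p" "p \<notin> \<Sigma>" "p\<^sup>2 dvd \<alpha> * n + \<beta>" "p \<le> s"
        unfolding s_def by (rule obtain_prime_square_dvd_linear[OF n(2) False _ _ M])
      moreover have "z \<le> p"
        using sifted[OF n(1) p(1,2)] p(3) dvd_trans[of p "p\<^sup>2"] by (simp add: power2_eq_square)
      ultimately show ?thesis
        using n(1) by (auto simp: P_def C_def)
    qed (use n(1) in \<open>simp add: Z_def\<close>)
  qed
  have card_C: "real (card (C p)) \<le> x / p\<^sup>2 + 1" if "p \<in> P" for p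
  proof -
    have "prime p" "p \<notin> \<Sigma>"
      using that by (auto simp: P_def)
    then have "coprime (p\<^sup>2) \<alpha>"
      using \<alpha>(2) prime_imp_coprime by (auto simp: sigma_unit_def)
    then show ?thesis
      unfolding C_def using S \<open>z \<le> x\<close> \<open>2 \<le> z\<close> \<open>prime p\<close>
      by (intro card_dvd_linear_le) (auto simp: prime_gt_0_int)
  qed
  have "real (card {n \<in> S. \<not> sigma_squarefree \<Sigma> (\<alpha> * n + \<beta>)})
      \<le> real (card Z) + (\<Sum>p\<in>P. real (card (C p)))"
    using card_le_Un_UN[OF cover] finS finP by (auto simp: Z_def C_def simp flip: of_nat_sum)
  also have "\<dots> \<le> 1 + (\<Sum>p\<in>P. x / p\<^sup>2 + 1)"
    using card_zeros_linear_le[OF \<alpha>(1) finS] card_C unfolding Z_def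
    by (intro add_mono sum_mono) auto
  also have "\<dots> = 1 + real (card P) + x * (\<Sum>p\<in>P. 1 / p\<^sup>2)"
    by (simp add: sum.distrib sum_distrib_left)
  also have "\<dots> \<le> 1 + (s - 1) + x * (1 / (z - 1))"
    using card_subset_atLeastAtMost_floor_le[OF P_sub s1]
      sum_inverse_squares_le[OF finP _ \<open>2 \<le> z\<close>] \<open>2 \<le> z\<close> \<open>z \<le> x\<close>
    by (intro add_mono mult_left_mono) (auto simp: P_def)
  finally show ?thesis
    by (simp add: s_def)
qed

lemma Omega_subset: "Omega \<Sigma> k a b x z \<subseteq> {1..\<lfloor>x\<rfloor>}"
  by (auto simp: Omega_def le_floor_iff)

lemma finite_primes_less: "finite {p::int. prime p \<and> real_of_int p < z \<and> p \<notin> \<Sigma>}"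
  by (rule finite_subset[of _ "{0..\<lceil>z\<rceil>}"])
    (auto simp: prime_ge_0_int ceiling_correct le_ceiling_iff)

lemma Omega_prime_divisor_ge:
  assumes "n \<in> Omega \<Sigma> k a b x z" "i \<in> {1..k}"
    and "prime p" "p \<notin> \<Sigma>" "p dvd a i * n + b i"
  shows "z \<le> real_of_int p"
proof (rule ccontr)
  assume "\<not> z \<le> real_of_int p"
  then have "p dvd P_sigma \<Sigma> z"
    using assms(3,4) unfolding P_sigma_def by (intro dvd_prodI finite_primes_less) auto
  moreover have "p dvd (\<Prod>i\<in>{1..k}. a i * n + b i)"
    using assms(2,5) dvd_prodI[of "{1..k}" i "\<lambda>i. a i * n + b i"] dvd_trans by auto
  ultimately have "p dvd 1"
    using assms(1) unfolding Omega_def by (metis (mono_tags, lifting) gcd_greatest mem_Collect_eq)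
  then show False
    using assms(3) not_prime_unit by blast
qed

theorem proposition3p5:
  fixes \<Sigma> :: "int set" and k :: nat and a b :: "nat \<Rightarrow> int" and x z :: real
  assumes "finite \<Sigma>" and "\<forall>p\<in>\<Sigma>. prime p"
    and "k \<ge> 1"
    and "\<forall>i\<in>{1..k}. a i \<noteq> 0"
    and "\<forall>i\<in>{1..k}. gcd (a i) (b i) = 1"
    and "\<forall>i\<in>{1..k}. \<forall>j\<in>{1..k}. i < j \<longrightarrow> a i * b j - a j * b i \<noteq> 0"
    and "sigma_unit \<Sigma> (fact (2 * k) * (\<Prod>i\<in>{1..k}. a i) *
           (\<Prod>i\<in>{1..k}. \<Prod>j\<in>{i<..k}. a i * b j - a j * b i))"
    and "2 \<le> z" and "z \<le> x"
  shows "real (card {n \<in> Omega \<Sigma> k a b x z. \<exists>i\<in>{1..k}. \<not> sigma_squarefree \<Sigma> (a i * n + b i)})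
     \<le> real k * real_of_int (Max ((\<lambda>i. \<bar>a i\<bar>) ` {1..k} \<union> (\<lambda>i. \<bar>b i\<bar>) ` {1..k})) * (x + 1) / (z - 1)
       + real k * sqrt (real_of_int (Max ((\<lambda>i. \<bar>a i\<bar>) ` {1..k} \<union> (\<lambda>i. \<bar>b i\<bar>) ` {1..k})) * x
                        + real_of_int (Max ((\<lambda>i. \<bar>a i\<bar>) ` {1..k} \<union> (\<lambda>i. \<bar>b i\<bar>) ` {1..k})))"
proof -
  define M where "M = Max ((\<lambda>i. \<bar>a i\<bar>) ` {1..k} \<union> (\<lambda>i. \<bar>b i\<bar>) ` {1..k})"
  define Bad where "Bad i = {n \<in> Omega \<Sigma> k a b x z. \<not> sigma_squarefree \<Sigma> (a i * n + b i)}" for i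
  have M_ge: "\<bar>a i\<bar> \<le> M" "\<bar>b i\<bar> \<le> M" if "i \<in> {1..k}" for i
    using that by (auto simp: M_def intro: Max_ge)
  have unit: "sigma_unit \<Sigma> (a i)" if "i \<in> {1..k}" for i
    using that by (intro sigma_unit_dvd[OF assms(7)] dvd_mult2 dvd_mult dvd_prodI) auto
  have card_Bad: "real (card (Bad i)) \<le> x / (z - 1) + sqrt (M * x + M)" if "i \<in> {1..k}" for i
    unfolding Bad_def
    using assms(4,8,9) that M_ge[OF that] unit[OF that] Omega_prime_divisor_ge[OF _ that]
    by (intro card_not_sigma_squarefree_le[OF Omega_subset]) blast+
  have "1 \<le> M"
    using M_ge(1)[of 1] assms(3,4) by force
  then have "1 * (x + 1) \<le> M * (x + 1)"
    using assms(8,9) by (intro mult_right_mono) auto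
  then have "x / (z - 1) \<le> M * (x + 1) / (z - 1)"
    using assms(8) by (intro divide_right_mono) auto
  have "{n \<in> Omega \<Sigma> k a b x z. \<exists>i\<in>{1..k}. \<not> sigma_squarefree \<Sigma> (a i * n + b i)} = (\<Union>i\<in>{1..k}. Bad i)"
    by (auto simp: Bad_def)
  then have "real (card {n \<in> Omega \<Sigma> k a b x z. \<exists>i\<in>{1..k}. \<not> sigma_squarefree \<Sigma> (a i * n + b i)})
      \<le> k * (x / (z - 1) + sqrt (M * x + M))"
    using card_UN_le_mult[of "{1..k}" Bad] card_Bad by simp
  also have "\<dots> \<le> k * (M * (x + 1) / (z - 1) + sqrt (M * x + M))"
    using \<open>x / (z - 1) \<le> M * (x + 1) / (z - 1)\<close> by (intro mult_left_mono) auto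
  also have "\<dots> = real k * real_of_int M * (x + 1) / (z - 1) + k * sqrt (M * x + M)"
    by (simp add: algebra_simps)
  finally show ?thesis
    unfolding M_def .
qed

end
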